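(* Let $C \ge 2$, $d \ge 1$, $I \ge 1$ and $J$ be integers with $1 \le J \le C$. Let $\{\xi_i\}_{i=1}^m$ be a sequence of random variables and $\{\mathbf{y}_i\}_{i=1}^m$ a sequence of random vectors in $\mathbb{R}^d$, each $\mathbf{y}_i$ depending on $\xi_1,\dots,\xi_i$, such that $\mathbb{E}_{\xi_i}[\mathbf{y}_i \mid \xi_1,\dots,\xi_{i-1}] = \mathbf{e}_i$ (so $\{\mathbf{y}_i-\mathbf{e}_i\}$ is a martingale difference sequence with respect to the filtration generated by $\{\xi_i\}$) and $\mathbb{E}_{\xi_i}[\|\mathbf{y}_i-\mathbf{e}_i\|^2 \mid \xi_1,\dots,\xi_{i-1}] \le \delta^2$ for all $i$, for a fixed constant $\delta>0$. Let $\mathbf{x}_1,\dots,\mathbf{x}_C \in \mathbb{R}^d$ be fixed vectors with population mean $\overline{\mathbf{x}} = \frac{1}{C}\sum_{k=1}^C \mathbf{x}_k$ and population variance $\nu^2 = \frac{1}{C}\sum_{k=1}^C \|\mathbf{x}_k-\overline{\mathbf{x}}\|^2$, and let $\psi=(\psi_1,\dots,\psi_C)$ be a uniformly random permutation of $\{1,\dots,C\}$ (i.e. $\mathbf{x}_{\psi_1},\mathbf{x}_{\psi_2},\dots$ are drawn from the population by sampling without replacement). For $1\le c\le J$, $0 \le i \le I-1$ and $1\le k\le c$ define $$p_{c,i}(k) = \begin{cases} I-1, & k \le c-1,\\ i-1, & k = c.\end{cases}$$ Then $$\sum_{c=1}^J \sum_{i=0}^{I-1} \mathbb{E}\left\|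 \sum_{k=1}^{c} \sum_{j=0}^{p_{c,i}(k)} (\mathbf{x}_{\psi_k} - \overline{\mathbf{x}})\right\|^2 \le \frac{1}{2} J^2 I^3 \nu^2 .$$
   Context: $\|\cdot\|$ is the Euclidean norm. An inner sum $\sum_{j=0}^{p}$ with $p=-1$ (which occurs for $k=c$, $i=0$) is empty and equals $0$. The expectation is over the random permutation $\psi$. The martingale vectors were denoted $\mathbf{x}_i$ in the paper; they are renamed $\mathbf{y}_i$ here only to avoid a clash with the population vectors. *)

theory Defs
  imports "HOL-Analysis.Analysis" "HOL-Probability.Probability" "HOL-Combinatorics.Permutations"
begin

definition pop_mean :: "nat \<Rightarrow> (nat \<Rightarrow> 'a::real_vector) \<Rightarrow> 'a" where
  "pop_mean C x = (1 / real C) *\<^sub>R (\<Sum>k=1..C. x k)"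

definition pop_var :: "nat \<Rightarrow> (nat \<Rightarrow> 'a::real_normed_vector) \<Rightarrow> real" where
  "pop_var C x = (1 / real C) * (\<Sum>k=1..C. (norm (x k - pop_mean C x))^2)"

text \<open>p_{c,i}(k): I-1 if k <= c-1, and i-1 if k = c (an integer; may be -1).\<close>
definition pci :: "nat \<Rightarrow> nat \<Rightarrow> nat \<Rightarrow> nat \<Rightarrow> int" where
  "pci I c i k = (if k < c then int I - 1 else int i - 1)"

end

theory Submission imports Defs begin

text \<open>With \<open>\<mu>\<close> the population mean, the inner sum over \<open>j\<close> collapses to
  \<open>a\<^sub>k (x (\<psi> k) - \<mu>)\<close> with a weight \<open>a\<^sub>k\<close> equal to \<open>I\<close> or \<open>i\<close>. Under a uniform
  permutation each centred sample \<open>x (\<psi> k) - \<mu>\<close> has second moment \<open>\<nu>\<^sup>2\<close>, and two distinct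
  samples are negatively correlated because the centred population sums to zero. As the weights
  are nonnegative, the cross terms can be dropped:
  \<open>E \<parallel>\<Sum>\<^sub>k a\<^sub>k (x (\<psi> k) - \<mu>)\<parallel>\<^sup>2 \<le> \<nu>\<^sup>2 \<Sum>\<^sub>k a\<^sub>k\<^sup>2 = \<nu>\<^sup>2 ((c - 1) I\<^sup>2 + i\<^sup>2)\<close>.
  Summing over \<open>c\<close> and \<open>i\<close> gives at most \<open>(J\<^sup>2/2 - J/6) I\<^sup>3 \<nu>\<^sup>2\<close>.\<close>

lemma sum_permutations_apply_eq:
  assumes "k \<in> A" "l \<in> A"
  shows "(\<Sum>\<psi> | \<psi> permutes A. g (\<psi> k)) = (\<Sum>\<psi> | \<psi> permutes A. g (\<psi> l))"
  using sum_permutations_compose_right[OF permutes_swap_id[OF assms(2,1)], of "\<lambda>\<psi>. g (\<psi> l)"]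
  by simp

lemma card_mult_sum_permutations_apply:
  fixes g :: "'a \<Rightarrow> real"
  assumes "finite A" "k \<in> A"
  shows "real (card A) * (\<Sum>\<psi> | \<psi> permutes A. g (\<psi> k))
       = real (card {\<psi>. \<psi> permutes A}) * (\<Sum>m\<in>A. g m)"
proof -
  have "real (card A) * (\<Sum>\<psi> | \<psi> permutes A. g (\<psi> k))
      = (\<Sum>l\<in>A. \<Sum>\<psi> | \<psi> permutes A. g (\<psi> k))"
    by simp
  also have "\<dots> = (\<Sum>l\<in>A. \<Sum>\<psi> | \<psi> permutes A. g (\<psi> l))"
    by (rule sum.cong[OF refl]) (rule sum_permutations_apply_eq[OF assms(2)])
  also have "\<dots> = (\<Sum>\<psi> | \<psi> permutes A. \<Sum>l\<in>A. g (\<psi> l))"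
    by (rule sum.swap)
  also have "\<dots> = (\<Sum>\<psi> | \<psi> permutes A. \<Sum>m\<in>A. g m)"
    by (rule sum.cong[OF refl]) (simp add: sum.permute[symmetric, unfolded comp_def])
  finally show ?thesis by simp
qed

lemma sum_permutations_inner_nonpos:
  fixes z :: "'a \<Rightarrow> 'b::real_inner"
  assumes "finite A" "k \<in> A" "l \<in> A" "k \<noteq> l" "(\<Sum>m\<in>A. z m) = 0"
  shows "(\<Sum>\<psi> | \<psi> permutes A. inner (z (\<psi> k)) (z (\<psi> l))) \<le> 0"
proof -
  define T where "T l' = (\<Sum>\<psi> | \<psi> permutes A. inner (z (\<psi> k)) (z (\<psi> l')))" for l'
  have T_eq: "T l' = T l" if "l' \<in> A - {k}" for l'
  proof -
    have "Transposition.transpose l l' k = k"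
      using that assms(4) by auto
    then show ?thesis
      using sum_permutations_compose_right[OF permutes_swap_id[OF assms(3), of l'],
        of "\<lambda>\<psi>. inner (z (\<psi> k)) (z (\<psi> l'))"] that assms(4)
      unfolding T_def by simp
  qed
  have sum_others: "(\<Sum>l'\<in>A - {k}. z (\<psi> l')) = - z (\<psi> k)" if "\<psi> permutes A" for \<psi>
    using sum.permute[OF that, of z] assms by (simp add: comp_def sum_diff1)
  have "real (card (A - {k})) * T l = (\<Sum>l'\<in>A - {k}. T l')"
    using T_eq by simp
  also have "\<dots> = (\<Sum>\<psi> | \<psi> permutes A. inner (z (\<psi> k)) (\<Sum>l'\<in>A - {k}. z (\<psi> l')))"
    unfolding T_def by (simp add: inner_sum_right sum.swap[of _ "A - {k}"])
  also have "\<dots> = - (\<Sum>\<psi> | \<psi> permutes A. inner (z (\<psi> k)) (z (\<psi> k)))"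
    by (simp add: sum_others sum_negf)
  also have "\<dots> \<le> 0"
    by (simp add: sum_nonneg)
  finally have "real (card (A - {k})) * T l \<le> 0" .
  moreover have "card (A - {k}) > 0"
    using assms by (intro card_gt_0_iff[THEN iffD2] conjI) auto
  ultimately show ?thesis
    unfolding T_def by (simp add: mult_le_0_iff)
qed

lemma sum_permutations_norm_weighted_sum_le:
  fixes z :: "'a \<Rightarrow> 'b::real_inner"
  assumes "finite A" "K \<subseteq> A" "\<And>k. k \<in> K \<Longrightarrow> a k \<ge> 0" "(\<Sum>m\<in>A. z m) = 0"
  shows "real (card A) * (\<Sum>\<psi> | \<psi> permutes A. (norm (\<Sum>k\<in>K. a k *\<^sub>R z (\<psi> k)))\<^sup>2)
     \<le> (\<Sum>k\<in>K. (a k)\<^sup>2) * real (card {\<psi>. \<psi> permutes A}) * (\<Sum>m\<in>A. (norm (z m))\<^sup>2)"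
proof -
  have "finite K"
    using assms(1,2) finite_subset by blast
  define T where "T k l = (\<Sum>\<psi> | \<psi> permutes A. inner (z (\<psi> k)) (z (\<psi> l)))" for k l
  have "(\<Sum>\<psi> | \<psi> permutes A. (norm (\<Sum>k\<in>K. a k *\<^sub>R z (\<psi> k)))\<^sup>2)
      = (\<Sum>k\<in>K. \<Sum>l\<in>K. a k * a l * T k l)"
    unfolding T_def power2_norm_eq_inner sum_distrib_left
    by (simp add: inner_sum_left inner_sum_right sum_distrib_left mult.assoc)
      (subst sum.swap, rule sum.cong[OF refl], subst sum.swap, simp add: mult.assoc inner_commute)
  also have "\<dots> \<le> (\<Sum>k\<in>K. (a k)\<^sup>2 * T k k)"
  proof (rule sum_mono)
    fix k assume k: "k \<in> K"
    have "a k * a l * T k l \<le> 0" if "l \<in> K - {k}" for l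
      using sum_permutations_inner_nonpos[OF assms(1) _ _ _ assms(4), of k l] k that assms(2,3)
      unfolding T_def by (auto intro!: mult_nonneg_nonpos)
    then have "(\<Sum>l\<in>K - {k}. a k * a l * T k l) \<le> 0"
      by (rule sum_nonpos)
    then show "(\<Sum>l\<in>K. a k * a l * T k l) \<le> (a k)\<^sup>2 * T k k"
      using \<open>finite K\<close> k by (simp add: sum.remove power2_eq_square)
  qed
  finally have "real (card A) * (\<Sum>\<psi> | \<psi> permutes A. (norm (\<Sum>k\<in>K. a k *\<^sub>R z (\<psi> k)))\<^sup>2)
      \<le> real (card A) * (\<Sum>k\<in>K. (a k)\<^sup>2 * T k k)"
    by (rule mult_left_mono) simp
  also have "\<dots> = (\<Sum>k\<in>K. (a k)\<^sup>2 * (real (card A) * T k k))"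
    by (simp add: sum_distrib_left algebra_simps)
  also have "\<dots> = (\<Sum>k\<in>K. (a k)\<^sup>2 * (real (card {\<psi>. \<psi> permutes A}) * (\<Sum>m\<in>A. (norm (z m))\<^sup>2)))"
    unfolding T_def power2_norm_eq_inner
    using card_mult_sum_permutations_apply[OF assms(1), of _ "\<lambda>m. inner (z m) (z m)"] assms(2)
    by (intro sum.cong[OF refl]) (simp add: subset_iff)
  finally show ?thesis
    by (simp add: sum_distrib_right mult.assoc)
qed

lemma expectation_norm_weighted_sum_permuted_le:
  fixes z :: "'a \<Rightarrow> 'b::real_inner"
  assumes "finite A" "K \<subseteq> A" "\<And>k. k \<in> K \<Longrightarrow> a k \<ge> 0" "(\<Sum>m\<in>A. z m) = 0"
  shows "measure_pmf.expectation (pmf_of_set {\<psi>. \<psi> permutes A})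
           (\<lambda>\<psi>. (norm (\<Sum>k\<in>K. a k *\<^sub>R z (\<psi> k)))\<^sup>2)
     \<le> (\<Sum>k\<in>K. (a k)\<^sup>2) * ((\<Sum>m\<in>A. (norm (z m))\<^sup>2) / real (card A))"
proof (cases "A = {}")
  case True
  then show ?thesis
    using assms(2) by (simp add: permutes_empty integral_pmf_of_set)
next
  case False
  have "finite {\<psi>. \<psi> permutes A}" "{\<psi>. \<psi> permutes A} \<noteq> {}"
    using assms(1) finite_permutations permutes_id by blast+
  moreover have "real (card A) > 0"
    using assms(1) False by (simp add: card_gt_0_iff)
  ultimately show ?thesis
    using sum_permutations_norm_weighted_sum_le[of A K a z] assms
    by (simp add: integral_pmf_of_set card_gt_0_iff field_simps)
qed

lemma sum_centred_eq_0: "(\<Sum>k=1..C. x k - pop_mean C x) = 0"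
  by (cases "C = 0") (simp_all add: sum_subtractf sum_constant_scaleR pop_mean_def)

lemma pop_var_nonneg: "pop_var C x \<ge> 0"
  by (simp add: pop_var_def sum_nonneg)

lemma sum_pci_const:
  fixes v :: "'a::real_vector"
  shows "(\<Sum>j\<in>{0..pci I c i k}. v) = real (if k < c then I else i) *\<^sub>R v"
  unfolding sum_constant_scaleR pci_def by simp

lemma sum_if_less_last:
  assumes "1 \<le> c"
  shows "(\<Sum>k=1..c. if k < c then u else v) = real (c - 1) * u + (v::real)"
proof -
  have "{1..c} = insert c {1..<c}"
    using assms by auto
  then show ?thesis
    by simp
qed

lemma sum_lessThan_square_le: "(\<Sum>i<I. (real i)\<^sup>2) \<le> real I ^ 3 / 3"
proof (induction I)
  case (Suc n)
  then have "(\<Sum>i<Suc n. (real i)\<^sup>2) \<le> real n ^ 3 / 3 + (real n)\<^sup>2"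
    by simp
  also have "\<dots> \<le> real (Suc n) ^ 3 / 3"
    by (simp add: power3_eq_cube power2_eq_square algebra_simps)
  finally show ?case .
qed simp

lemma sum_shifted_plus_third: "(\<Sum>c=1..J. real c - 1 + 1/3) = real J ^ 2 / 2 - real J / 6"
  by (induction J) (simp_all add: power2_eq_square field_simps)

lemma sum_weights_le:
  "(\<Sum>c=1..J. \<Sum>i<I. real (c - 1) * real I ^ 2 + real i ^ 2) \<le> real J ^ 2 * real I ^ 3 / 2"
proof -
  have "(\<Sum>c=1..J. \<Sum>i<I. real (c - 1) * real I ^ 2 + real i ^ 2)
      = (\<Sum>c=1..J. (real c - 1) * real I ^ 3 + (\<Sum>i<I. real i ^ 2))"
    by (intro sum.cong) (auto simp: sum.distrib of_nat_diff power3_eq_cube power2_eq_square)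
  also have "\<dots> \<le> (\<Sum>c=1..J. (real c - 1) * real I ^ 3 + real I ^ 3 / 3)"
    using sum_lessThan_square_le by (intro sum_mono) auto
  also have "\<dots> = real I ^ 3 * (real J ^ 2 / 2 - real J / 6)"
    by (simp flip: sum_shifted_plus_third add: sum_distrib_left algebra_simps)
  also have "\<dots> \<le> real J ^ 2 * real I ^ 3 / 2"
    by (simp add: algebra_simps)
  finally show ?thesis .
qed

lemma expectation_norm_sum_pci_le:
  fixes x :: "nat \<Rightarrow> 'a::real_inner"
  assumes "1 \<le> c" "c \<le> C"
  shows "measure_pmf.expectation (pmf_of_set {\<psi>. \<psi> permutes {1..C}})
           (\<lambda>\<psi>. (norm (\<Sum>k=1..c. \<Sum>j\<in>{0..pci I c i k}. x (\<psi> k) - pop_mean C x))\<^sup>2)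
     \<le> (real (c - 1) * real I ^ 2 + real i ^ 2) * pop_var C x"
proof -
  define a where "a k = real (if k < c then I else i)" for k
  have "(\<Sum>k=1..c. (a k)\<^sup>2) = real (c - 1) * real I ^ 2 + real i ^ 2"
    unfolding a_def if_distrib[of real] if_distrib[of "\<lambda>t. t ^ 2"]
    by (rule sum_if_less_last[OF assms(1)])
  moreover have "(\<Sum>m=1..C. (norm (x m - pop_mean C x))\<^sup>2) / real C = pop_var C x"
    by (simp add: pop_var_def)
  ultimately show ?thesis
    using expectation_norm_weighted_sum_permuted_le[of "{1..C}" "{1..c}" a "\<lambda>m. x m - pop_mean C x"]
      sum_centred_eq_0[of x C] assms
    by (simp add: sum_pci_const a_def)
qed

theorem lemma4:
  fixes C I J :: nat and x :: "nat \<Rightarrow> real^'d"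
  assumes "C \<ge> 2" and "I \<ge> 1" and "1 \<le> J" and "J \<le> C"
  shows "(\<Sum>c=1..J. \<Sum>i<I.
            measure_pmf.expectation (pmf_of_set {\<psi>. \<psi> permutes {1..C}})
              (\<lambda>\<psi>. (norm (\<Sum>k=1..c. \<Sum>j\<in>{0..pci I c i k}. x (\<psi> k) - pop_mean C x))^2))
         \<le> 1/2 * real J ^ 2 * real I ^ 3 * pop_var C x"
proof -
  have "(\<Sum>c=1..J. \<Sum>i<I.
            measure_pmf.expectation (pmf_of_set {\<psi>. \<psi> permutes {1..C}})
              (\<lambda>\<psi>. (norm (\<Sum>k=1..c. \<Sum>j\<in>{0..pci I c i k}. x (\<psi> k) - pop_mean C x))^2))
      \<le> (\<Sum>c=1..J. \<Sum>i<I. (real (c - 1) * real I ^ 2 + real i ^ 2) * pop_var C x)"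
    using assms(4) by (intro sum_mono expectation_norm_sum_pci_le) auto
  also have "\<dots> = (\<Sum>c=1..J. \<Sum>i<I. real (c - 1) * real I ^ 2 + real i ^ 2) * pop_var C x"
    by (simp add: sum_distrib_right)
  also have "\<dots> \<le> 1/2 * real J ^ 2 * real I ^ 3 * pop_var C x"
    using mult_right_mono[OF sum_weights_le pop_var_nonneg] by simp
  finally show ?thesis .
qed

end
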